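(* Let $G$ be a group, $s$ a central involution of $G$, $T$ a finite tree with at least one edge, and $\zeta\in G(L(T))$. Then there exists a $G$-phase $H$ of $T$ with $\Psi_L(H)=\zeta$ if and only if $\zeta\sim\mathbf{s}$.
   Context: A $G$-gain graph $(\Gamma,\psi)$ consists of a graph $\Gamma=(V_\Gamma,E_\Gamma)$ and a map $\psi$ assigning to each ordered pair $(u,v)$ of adjacent vertices an element of $G$ with $\psi(v,u)=\psi(u,v)^{-1}$; $G(\Gamma)$ is the set of such maps. For an involution $s$, $\mathbf{s}$ is the gain function constantly equal to $s$. Gain functions $\psi_1,\psi_2$ on $\Gamma$ are switching equivalent ($\psi_1\sim\psi_2$) if there is $f:V_\Gamma\to G$ with $\psi_2(u,v)=f(u)^{-1}\psi_1(u,v)f(v)$ for all adjacent $u,v$. The line graph $L(\Gamma)$ has vertex set $E_\Gamma$, two edges being adjacent iff they share an endpoint. With $V_\Gamma=\{v_1,\dots,v_n\}$, $E_\Gamma=\{e_1,\dots,e_m\}$, a $G$-phase of $\Gamma$ is a matrix $H=(H_{i,k})$ with $H_{i,k}\in G$ if $v_i\in e_k$ and $H_{i,k}=0$ otherwise. Given a fixed central involution $s$ of $G$, $\Psi_L(H)\in G(L(\Gamma))$ is defined by $\Psi_L(H)(e_p,e_q)=s\,(H_{r,p})^{-1}H_{r,q}$, where $v_r$ is the common endpoint of the adjacent edges $e_p,e_q$. *)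

theory Defs
  imports "HOL-Algebra.Group"
begin

definition simple_graph :: "'v set \<Rightarrow> 'v set set \<Rightarrow> bool" where
  "simple_graph V E \<longleftrightarrow> (\<forall>e\<in>E. \<exists>u v. e = {u, v} \<and> u \<noteq> v \<and> u \<in> V \<and> v \<in> V)"

definition graph_adj :: "'v set set \<Rightarrow> 'v \<Rightarrow> 'v \<Rightarrow> bool" where
  "graph_adj E u v \<longleftrightarrow> u \<noteq> v \<and> {u, v} \<in> E"

definition graph_connected :: "'v set \<Rightarrow> 'v set set \<Rightarrow> bool" where
  "graph_connected V E \<longleftrightarrow>
     (\<forall>u\<in>V. \<forall>v\<in>V. (u, v) \<in> {(x, y). graph_adj E x y}\<^sup>*)"

definition graph_has_cycle :: "'v set \<Rightarrow> 'v set set \<Rightarrow> bool" where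
  "graph_has_cycle V E \<longleftrightarrow>
     (\<exists>cs. length cs \<ge> 3 \<and> distinct cs \<and> set cs \<subseteq> V \<and>
        (\<forall>i. Suc i < length cs \<longrightarrow> graph_adj E (cs ! i) (cs ! Suc i)) \<and>
        graph_adj E (last cs) (hd cs))"

definition finite_tree :: "'v set \<Rightarrow> 'v set set \<Rightarrow> bool" where
  "finite_tree V E \<longleftrightarrow> finite V \<and> V \<noteq> {} \<and> simple_graph V E \<and>
     graph_connected V E \<and> \<not> graph_has_cycle V E"

definition line_edges :: "'v set set \<Rightarrow> 'v set set set" where
  "line_edges E = {{p, q} | p q. p \<in> E \<and> q \<in> E \<and> p \<noteq> q \<and> p \<inter> q \<noteq> {}}"

text \<open>The line graph L(V,E) has vertex set E and edge set line_edges E.\<close>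

text \<open>A G-gain function on the graph (V,E): a map on ordered pairs of adjacent vertices
  with values in G and psi(v,u) = psi(u,v)^{-1}; by convention it is undefined
  on non-adjacent pairs (so that gain functions are determined by their values on
  adjacent pairs).\<close>
definition gain_functions :: "('g, 'b) monoid_scheme \<Rightarrow> 'v set set \<Rightarrow> ('v \<Rightarrow> 'v \<Rightarrow> 'g) set" where
  "gain_functions G E = {\<psi>. (\<forall>u v. graph_adj E u v \<longrightarrow>
        \<psi> u v \<in> carrier G \<and> \<psi> v u = inv\<^bsub>G\<^esub> (\<psi> u v)) \<and>
      (\<forall>u v. \<not> graph_adj E u v \<longrightarrow> \<psi> u v = undefined)}"

definition const_gain :: "'v set set \<Rightarrow> 'g \<Rightarrow> 'v \<Rightarrow> 'v \<Rightarrow> 'g" where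
  "const_gain E s = (\<lambda>u v. if graph_adj E u v then s else undefined)"

definition switching_equiv ::
  "('g, 'b) monoid_scheme \<Rightarrow> 'v set \<Rightarrow> 'v set set \<Rightarrow> ('v \<Rightarrow> 'v \<Rightarrow> 'g) \<Rightarrow> ('v \<Rightarrow> 'v \<Rightarrow> 'g) \<Rightarrow> bool" where
  "switching_equiv G V E \<psi>1 \<psi>2 \<longleftrightarrow>
     (\<exists>f. (\<forall>v\<in>V. f v \<in> carrier G) \<and>
        (\<forall>u v. graph_adj E u v \<longrightarrow> \<psi>2 u v = inv\<^bsub>G\<^esub> (f u) \<otimes>\<^bsub>G\<^esub> \<psi>1 u v \<otimes>\<^bsub>G\<^esub> f v))"

text \<open>A G-phase of (V,E) is an incidence-indexed matrix H: H v e \<in> G whenever v \<in> e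
  (v \<in> V, e \<in> E).  The zero entries (v \<notin> e) play no role and are left unconstrained.\<close>
definition G_phase :: "('g, 'b) monoid_scheme \<Rightarrow> 'v set \<Rightarrow> 'v set set \<Rightarrow> ('v \<Rightarrow> 'v set \<Rightarrow> 'g) \<Rightarrow> bool" where
  "G_phase G V E H \<longleftrightarrow> (\<forall>v\<in>V. \<forall>e\<in>E. v \<in> e \<longrightarrow> H v e \<in> carrier G)"

definition Psi_L :: "('g, 'b) monoid_scheme \<Rightarrow> 'g \<Rightarrow> 'v set set \<Rightarrow> ('v \<Rightarrow> 'v set \<Rightarrow> 'g) \<Rightarrow> 'v set \<Rightarrow> 'v set \<Rightarrow> 'g" where
  "Psi_L G s E H = (\<lambda>p q. if graph_adj (line_edges E) p q then
       (let r = (THE r. r \<in> p \<inter> q) in s \<otimes>\<^bsub>G\<^esub> inv\<^bsub>G\<^esub> (H r p) \<otimes>\<^bsub>G\<^esub> H r q)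
     else undefined)"

definition central_involution :: "('g, 'b) monoid_scheme \<Rightarrow> 'g \<Rightarrow> bool" where
  "central_involution G s \<longleftrightarrow> s \<in> carrier G \<and> s \<noteq> \<one>\<^bsub>G\<^esub> \<and> s \<otimes>\<^bsub>G\<^esub> s = \<one>\<^bsub>G\<^esub> \<and>
     (\<forall>g\<in>carrier G. s \<otimes>\<^bsub>G\<^esub> g = g \<otimes>\<^bsub>G\<^esub> s)"

end

theory Submission
  imports Defs "HOL-Library.Transitive_Closure_Table"
begin

(* On a forest every gain function \<phi> is balanced: there is a potential k with k b = k a \<phi>(a,b),
   built edge by edge, which works because a new edge never closes a path.
   Given a phase H, apply this to \<phi>(a,b) = H_a{a,b} (H_b{a,b})^{-1}; then f(p) = k(r) H_r p does not
   depend on the endpoint r of p, and since s is central, \<Psi>_L(H)(p,q) = f(p)^{-1} s f(q).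
   Conversely, from \<zeta> = f(p)^{-1} s f(q) the phase H_r p = f(p) does the job. *)

lemma graph_adj_sym: "graph_adj E x y \<Longrightarrow> graph_adj E y x"
  unfolding graph_adj_def by (auto simp: insert_commute)

lemma graph_has_cycle_mono:
  assumes "graph_has_cycle V E" "E \<subseteq> E'" shows "graph_has_cycle V E'"
  using assms unfolding graph_has_cycle_def graph_adj_def by blast

lemma simple_graph_finite_edges:
  assumes "simple_graph V E" "finite V" shows "finite E"
proof -
  have "E \<subseteq> Pow V"
  proof
    fix e assume "e \<in> E"
    then obtain u v where "e = {u, v}" "u \<in> V" "v \<in> V"
      using assms(1) unfolding simple_graph_def by blast
    then show "e \<in> Pow V" by simp
  qed
  then show ?thesis using assms(2) finite_subset by blast
qed

lemma acyclic_no_path_between_edge_ends: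
  assumes sg: "simple_graph V (insert {a, b} E')" and nc: "\<not> graph_has_cycle V (insert {a, b} E')"
    and ab: "a \<noteq> b" "b \<in> V" and new: "{a, b} \<notin> E'"
  shows "(b, a) \<notin> {(x, y). graph_adj E' x y}\<^sup>*"
proof
  assume "(b, a) \<in> {(x, y). graph_adj E' x y}\<^sup>*"
  then have "(graph_adj E')\<^sup>*\<^sup>* b a" by (simp add: rtrancl_def)
  then obtain xs0 where "rtrancl_path (graph_adj E') b xs0 a"
    using rtranclp_eq_rtrancl_path by metis
  then obtain xs where path: "rtrancl_path (graph_adj E') b xs a" and dist: "distinct (b # xs)"
    using rtrancl_path_distinct by metis
  have "xs \<noteq> []" using path ab(1) by (auto elim: rtrancl_path.cases)
  then have last: "last xs = a" using rtrancl_path_last[OF path] by blast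
  have "set xs \<subseteq> V"
  proof
    fix z assume "z \<in> set xs"
    then obtain y where "graph_adj E' y z" using rtrancl_path_Range[OF path] by blast
    then show "z \<in> V" using sg unfolding simple_graph_def graph_adj_def
      by (metis doubleton_eq_iff insertCI)
  qed
  moreover have "length xs \<ge> 2"
  proof (rule ccontr)
    assume "\<not> length xs \<ge> 2"
    with \<open>xs \<noteq> []\<close> last have "xs = [a]" by (cases xs; cases "tl xs") auto
    with rtrancl_path_nth[OF path, of 0] have "graph_adj E' b a" by simp
    then show False using new unfolding graph_adj_def by (auto simp: insert_commute)
  qed
  moreover have "graph_adj (insert {a, b} E') ((b # xs) ! i) ((b # xs) ! Suc i)"
    if "Suc i < length (b # xs)" for i
    using rtrancl_path_nth[OF path, of i] that unfolding graph_adj_def by auto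
  moreover have "graph_adj (insert {a, b} E') (last (b # xs)) (hd (b # xs))"
    using last \<open>xs \<noteq> []\<close> ab(1) unfolding graph_adj_def by auto
  ultimately have "graph_has_cycle V (insert {a, b} E')"
    unfolding graph_has_cycle_def using dist ab(2)
    by (intro exI[of _ "b # xs"]) auto
  with nc show False by contradiction
qed

definition gain_potential ::
  "('g, 'b) monoid_scheme \<Rightarrow> 'v set set \<Rightarrow> ('v \<Rightarrow> 'v \<Rightarrow> 'g) \<Rightarrow> ('v \<Rightarrow> 'g) \<Rightarrow> bool" where
  "gain_potential G E \<phi> k \<longleftrightarrow>
     (\<forall>x. k x \<in> carrier G) \<and> (\<forall>a b. graph_adj E a b \<longrightarrow> k b = k a \<otimes>\<^bsub>G\<^esub> \<phi> a b)"

lemma gain_potential_insert_edge: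
  fixes G (structure)
  assumes grp: "group G"
    and \<phi>: "\<And>x y. graph_adj (insert {a, b} E') x y \<Longrightarrow> \<phi> x y \<in> carrier G \<and> \<phi> y x = inv (\<phi> x y)"
    and k': "gain_potential G E' \<phi> k'"
    and ab: "a \<noteq> b" and no_path: "(b, a) \<notin> {(x, y). graph_adj E' x y}\<^sup>*"
  shows "\<exists>k. gain_potential G (insert {a, b} E') \<phi> k"
proof -
  interpret group G by fact
  define R where "R = {(x, y). graph_adj E' x y}\<^sup>*"
  have k'c: "k' x \<in> carrier G" for x using k' unfolding gain_potential_def by blast
  have "graph_adj (insert {a, b} E') a b" using ab unfolding graph_adj_def by simp
  with \<phi> have \<phi>ab: "\<phi> a b \<in> carrier G" "\<phi> b a = inv (\<phi> a b)" by auto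
  \<comment> \<open>correct k' by a constant on the component of b, which does not contain a\<close>
  define c where "c = k' a \<otimes> \<phi> a b \<otimes> inv (k' b)"
  have cc: "c \<in> carrier G" unfolding c_def using k'c \<phi>ab by auto
  define k where "k x = (if (b, x) \<in> R then c \<otimes> k' x else k' x)" for x
  have kc: "k x \<in> carrier G" for x unfolding k_def using k'c cc by auto
  have kb: "k b = k a \<otimes> \<phi> a b"
    using no_path k'c \<phi>ab unfolding k_def c_def R_def by (simp add: m_assoc)
  have ka: "k a = k b \<otimes> \<phi> b a"
    using kb kc \<phi>ab by (simp add: m_assoc)
  have "k y = k x \<otimes> \<phi> x y" if adj: "graph_adj (insert {a, b} E') x y" for x y
  proof (cases "graph_adj E' x y")
    case True
    then have "(b, x) \<in> R \<longleftrightarrow> (b, y) \<in> R"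
      using graph_adj_sym[OF True] unfolding R_def by (blast intro: rtrancl_into_rtrancl)
    moreover have "k' y = k' x \<otimes> \<phi> x y" using k' True unfolding gain_potential_def by blast
    ultimately show ?thesis unfolding k_def using k'c cc \<phi>[OF adj] by (simp add: m_assoc)
  next
    case False
    with adj have "(x = a \<and> y = b) \<or> (x = b \<and> y = a)"
      unfolding graph_adj_def by (auto simp: doubleton_eq_iff)
    then show ?thesis using ka kb by auto
  qed
  with kc show ?thesis unfolding gain_potential_def by blast
qed

lemma acyclic_gain_potential_exists:
  fixes G (structure)
  assumes grp: "group G" and fin: "finite E"
    and sg: "simple_graph V E" and nc: "\<not> graph_has_cycle V E"
    and \<phi>: "\<And>a b. graph_adj E a b \<Longrightarrow> \<phi> a b \<in> carrier G \<and> \<phi> b a = inv (\<phi> a b)"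
  shows "\<exists>k. gain_potential G E \<phi> k"
  using fin sg nc \<phi>
proof (induction E rule: finite_induct)
  case empty
  show ?case
    by (rule exI[of _ "\<lambda>_. \<one>"]) (simp add: gain_potential_def graph_adj_def group.is_monoid[OF grp])
next
  case (insert e E')
  obtain a b where e: "e = {a, b}" "a \<noteq> b" "b \<in> V"
    using insert.prems(1) unfolding simple_graph_def by blast
  have "simple_graph V E'" using insert.prems(1) unfolding simple_graph_def by blast
  moreover have "\<not> graph_has_cycle V E'"
    using insert.prems(2) graph_has_cycle_mono[of V E' "insert e E'"] by blast
  moreover have "\<phi> x y \<in> carrier G \<and> \<phi> y x = inv (\<phi> x y)" if "graph_adj E' x y" for x y
    using insert.prems(3) that unfolding graph_adj_def by blast
  ultimately obtain k' where "gain_potential G E' \<phi> k'"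
    using insert.IH by blast
  moreover have "(b, a) \<notin> {(x, y). graph_adj E' x y}\<^sup>*"
    using acyclic_no_path_between_edge_ends[of V a b E'] insert.prems(1,2) insert.hyps(2) e
    by simp
  ultimately show ?case
    using gain_potential_insert_edge[OF grp, of a b E' \<phi>] insert.prems(3) e by simp
qed

lemma line_adj_common_vertex:
  assumes sg: "simple_graph V E" and adj: "graph_adj (line_edges E) p q"
  shows "p \<in> E \<and> q \<in> E \<and> (\<exists>r. p \<inter> q = {r})"
proof -
  from adj have pq: "p \<noteq> q" "{p, q} \<in> line_edges E" unfolding graph_adj_def by auto
  then have E: "p \<in> E" "q \<in> E" and "p \<inter> q \<noteq> {}"
    unfolding line_edges_def by (auto simp: doubleton_eq_iff)
  then obtain r where r: "r \<in> p \<inter> q" by blast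
  have "r' = r" if "r' \<in> p \<inter> q" for r'
  proof (rule ccontr)
    assume "r' \<noteq> r"
    moreover obtain u v where "p = {u, v}" using sg E(1) unfolding simple_graph_def by blast
    moreover obtain w x where "q = {w, x}" using sg E(2) unfolding simple_graph_def by blast
    ultimately have "p = {r, r'}" "q = {r, r'}" using r that by blast+
    with pq(1) show False by simp
  qed
  with r E show ?thesis by blast
qed

lemma Psi_L_common_vertex:
  assumes "graph_adj (line_edges E) p q" "p \<inter> q = {r}"
  shows "Psi_L G s E H p q = s \<otimes>\<^bsub>G\<^esub> inv\<^bsub>G\<^esub> (H r p) \<otimes>\<^bsub>G\<^esub> H r q"
  using assms by (simp add: Psi_L_def)

lemma (in group) central_conj_eq:
  assumes s: "s \<in> carrier G" "\<forall>g\<in>carrier G. s \<otimes> g = g \<otimes> s"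
    and c: "k \<in> carrier G" "x \<in> carrier G" "y \<in> carrier G"
  shows "inv (k \<otimes> x) \<otimes> s \<otimes> (k \<otimes> y) = s \<otimes> inv x \<otimes> y"
proof -
  have sk: "s \<otimes> k = k \<otimes> s" and sx: "s \<otimes> inv x = inv x \<otimes> s"
    using s(2) c by (simp_all only: inv_closed)
  have "inv (k \<otimes> x) \<otimes> s \<otimes> (k \<otimes> y) = inv x \<otimes> (inv k \<otimes> (s \<otimes> k)) \<otimes> y"
    using s(1) c by (simp add: inv_mult_group m_assoc)
  also have "inv k \<otimes> (s \<otimes> k) = s"
    using s(1) c by (simp add: sk flip: m_assoc)
  finally show ?thesis using sx by simp
qed

lemma switching_equiv_const_gain_if_Psi_L:
  fixes G (structure)
  assumes grp: "group G"
    and s: "s \<in> carrier G" "\<forall>g\<in>carrier G. s \<otimes> g = g \<otimes> s"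
    and fin: "finite E" and sg: "simple_graph V E" and nc: "\<not> graph_has_cycle V E"
    and H: "G_phase G V E H"
  shows "switching_equiv G E (line_edges E) (const_gain (line_edges E) s) (Psi_L G s E H)"
proof -
  interpret group G by fact
  have ends: "\<exists>u v. p = {u, v} \<and> u \<noteq> v \<and> u \<in> V \<and> v \<in> V" if "p \<in> E" for p
    using sg that unfolding simple_graph_def by blast
  have Hc: "H r p \<in> carrier G" if "p \<in> E" "r \<in> p" for r p
  proof -
    from ends[OF that(1)] that(2) have "r \<in> V" by blast
    with H that show ?thesis unfolding G_phase_def by blast
  qed
  define \<phi> where "\<phi> a b = H a {a, b} \<otimes> inv (H b {a, b})" for a b
  have "\<phi> a b \<in> carrier G \<and> \<phi> b a = inv (\<phi> a b)" if "graph_adj E a b" for a b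
  proof -
    have "{a, b} \<in> E" "{b, a} = {a, b}" using that unfolding graph_adj_def by auto
    then show ?thesis unfolding \<phi>_def using Hc by (simp add: inv_mult_group)
  qed
  then obtain k where k: "gain_potential G E \<phi> k"
    using acyclic_gain_potential_exists[OF grp fin sg nc] by blast
  have kc: "k x \<in> carrier G" for x using k unfolding gain_potential_def by blast
  have transport: "k a \<otimes> H a {a, b} = k b \<otimes> H b {a, b}" if "{a, b} \<in> E" for a b
  proof (cases "a = b")
    case False
    with that have "graph_adj E a b" unfolding graph_adj_def by simp
    with k have "k b = k a \<otimes> (H a {a, b} \<otimes> inv (H b {a, b}))"
      unfolding gain_potential_def \<phi>_def by blast
    then show ?thesis using Hc[OF that] kc by (simp add: m_assoc)
  qed simp
  define f where "f p = k (SOME r. r \<in> p) \<otimes> H (SOME r. r \<in> p) p" for p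
  have f: "f p = k r \<otimes> H r p" if "p \<in> E" "r \<in> p" for p r
  proof -
    define t where "t = (SOME r. r \<in> p)"
    have "t \<in> p" unfolding t_def using that(2) by (rule someI)
    with ends[OF that(1)] that(2) have "p = {t, r} \<or> t = r" by blast
    then have "k t \<otimes> H t p = k r \<otimes> H r p" using transport that(1) by blast
    then show ?thesis unfolding f_def t_def .
  qed
  show ?thesis unfolding switching_equiv_def
  proof (intro exI[of _ f] conjI ballI allI impI)
    fix p assume "p \<in> E"
    with ends obtain r where "r \<in> p" by blast
    with \<open>p \<in> E\<close> show "f p \<in> carrier G" using f Hc kc by simp
  next
    fix p q assume adj: "graph_adj (line_edges E) p q"
    then obtain r where r: "p \<in> E" "q \<in> E" "p \<inter> q = {r}"
      using line_adj_common_vertex[OF sg] by blast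
    then have rpq: "r \<in> p" "r \<in> q" by auto
    have "Psi_L G s E H p q = s \<otimes> inv (H r p) \<otimes> H r q"
      using Psi_L_common_vertex[OF adj r(3)] .
    also have "\<dots> = inv (k r \<otimes> H r p) \<otimes> s \<otimes> (k r \<otimes> H r q)"
      using central_conj_eq[OF s kc Hc[OF r(1) rpq(1)] Hc[OF r(2) rpq(2)]] by simp
    also have "\<dots> = inv (f p) \<otimes> const_gain (line_edges E) s p q \<otimes> f q"
      using f[OF r(1) rpq(1)] f[OF r(2) rpq(2)] adj unfolding const_gain_def by simp
    finally show "Psi_L G s E H p q = inv (f p) \<otimes> const_gain (line_edges E) s p q \<otimes> f q" .
  qed
qed

lemma Psi_L_exists_if_switching_equiv:
  fixes G (structure) and E :: "'v set set"
  assumes grp: "group G" and s: "\<forall>g\<in>carrier G. s \<otimes> g = g \<otimes> s"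
    and sg: "simple_graph V E" and \<zeta>: "\<zeta> \<in> gain_functions G (line_edges E)"
    and sw: "switching_equiv G E (line_edges E) (const_gain (line_edges E) s) \<zeta>"
  shows "\<exists>H. G_phase G V E H \<and> Psi_L G s E H = \<zeta>"
proof -
  interpret group G by fact
  obtain f where fc: "\<forall>p\<in>E. f p \<in> carrier G"
    and f: "\<forall>p q. graph_adj (line_edges E) p q \<longrightarrow>
              \<zeta> p q = inv (f p) \<otimes> const_gain (line_edges E) s p q \<otimes> f q"
    using sw unfolding switching_equiv_def by blast
  define H where "H r p = f p" for r :: 'v and p
  have "Psi_L G s E H p q = \<zeta> p q" for p q
  proof (cases "graph_adj (line_edges E) p q")
    case True
    then have c: "f p \<in> carrier G" "f q \<in> carrier G"
      using line_adj_common_vertex[OF sg] fc by blast+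
    have "\<zeta> p q = inv (f p) \<otimes> s \<otimes> f q" using f True unfolding const_gain_def by simp
    also have "\<dots> = s \<otimes> inv (f p) \<otimes> f q" using s c(1) by simp
    finally show ?thesis using True unfolding Psi_L_def H_def by (simp add: Let_def)
  next
    case False
    then show ?thesis using \<zeta> unfolding Psi_L_def gain_functions_def by simp
  qed
  moreover have "G_phase G V E H" unfolding G_phase_def H_def using fc by blast
  ultimately show ?thesis by blast
qed

theorem mainTheorem2:
  fixes G :: "('g, 'b) monoid_scheme" and s :: 'g
    and V :: "'v set" and E :: "'v set set" and \<zeta> :: "'v set \<Rightarrow> 'v set \<Rightarrow> 'g"
  assumes "group G"
    and "central_involution G s"
    and "finite_tree V E"
    and "E \<noteq> {}"
    and "\<zeta> \<in> gain_functions G (line_edges E)"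
  shows "(\<exists>H. G_phase G V E H \<and> Psi_L G s E H = \<zeta>) \<longleftrightarrow>
         switching_equiv G E (line_edges E) (const_gain (line_edges E) s) \<zeta>"
proof -
  have s: "s \<in> carrier G" "\<forall>g\<in>carrier G. s \<otimes>\<^bsub>G\<^esub> g = g \<otimes>\<^bsub>G\<^esub> s"
    using assms(2) unfolding central_involution_def by auto
  have tree: "finite V" "simple_graph V E" "\<not> graph_has_cycle V E"
    using assms(3) unfolding finite_tree_def by auto
  show ?thesis
    using switching_equiv_const_gain_if_Psi_L[OF assms(1) s
            simple_graph_finite_edges[OF tree(2,1)] tree(2,3)]
          Psi_L_exists_if_switching_equiv[OF assms(1) s(2) tree(2) assms(5)]
    by blast
qed

end
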